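(* Let $n \ge 2$ and let $\mathcal{P} = \langle x, y \mid x^n y^{-2}, R\rangle$, $R \in F(x,y)$, be a regular presentation of $Q_{4n}$. Then there exist an integer $k \ge 0$ and nonzero integers $n_1, m_1, \dots, n_k, m_k$ such that $\mathcal{P} \simeq_Q \mathcal{P}_n(n_1,\dots,n_k;m_1,\dots,m_k)$.
   Context: $Q_{4n}$ is identified with $\langle x, y \mid x^n y^{-2}, xyxy^{-1} \rangle$ and $F(x,y)$ is the free group on $x,y$. A presentation $\langle x, y \mid x^n y^{-2}, R\rangle$ is regular if the map $x \mapsto x$, $y \mapsto y$ induces a group isomorphism from the group it presents to $Q_{4n}$. For integers $k\ge 0$, $n_1,\dots,n_k,m_1,\dots,m_k$, with $n_{k+1} = 1 - \sum_{i=1}^k n_i$, $m_{k+1} = 1 - \sum_{i=1}^k m_i$, $\mathcal{P}_n(n_1,\dots,n_k;m_1,\dots,m_k) = \langle x, y \mid x^n y^{-2},\ x^{n_1} y x^{m_1} y^{-1} \cdots x^{n_{k+1}} y x^{m_{k+1}} y^{-1} \rangle$. Two finite presentations on the same generators are $Q$-equivalent ($\simeq_Q$) if related by a finite sequence of the moves: replace a relator $r_i$ by $r_ir_j$ ($j\neq i$); replace $r_i$ by $r_i^{-1}$; replace $r_i$ by $wr_iw^{-1}$ for some $w$ in the free group on the generators. *)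

theory Defs
  imports "HOL-Algebra.Algebra"
begin

datatype gen = GX | GY

type_synonym letter = "gen \<times> bool"   \<comment> \<open>True = generator, False = its inverse\<close>
type_synonym word = "letter list"

definition inv_letter :: "letter \<Rightarrow> letter" where
  "inv_letter l = (fst l, \<not> snd l)"

fun red :: "word \<Rightarrow> word" where
  "red [] = []"
| "red (a # w) = (case red w of [] \<Rightarrow> [a]
                   | b # u \<Rightarrow> (if b = inv_letter a then u else a # b # u))"

fun reduced :: "word \<Rightarrow> bool" where
  "reduced [] = True"
| "reduced [a] = True"
| "reduced (a # b # w) = (b \<noteq> inv_letter a \<and> reduced (b # w))"

definition wmult :: "word \<Rightarrow> word \<Rightarrow> word" where
  "wmult u v = red (u @ v)"

definition winv :: "word \<Rightarrow> word" where
  "winv w = rev (map inv_letter w)"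

definition FG :: "word monoid" where
  "FG = \<lparr>carrier = {w. reduced w}, monoid.mult = wmult, one = []\<rparr>"

definition normal_closure :: "('a, 'b) monoid_scheme \<Rightarrow> 'a set \<Rightarrow> 'a set" where
  "normal_closure G S = \<Inter>{N. N \<lhd> G \<and> S \<subseteq> N}"

definition pres_group :: "word list \<Rightarrow> word set monoid" where
  "pres_group rels = FG Mod (normal_closure FG (set rels))"

definition gx :: word where "gx = [(GX, True)]"
definition gy :: word where "gy = [(GY, True)]"

definition xpow :: "int \<Rightarrow> word" where
  "xpow a = (if a \<ge> 0 then replicate (nat a) (GX, True) else replicate (nat (- a)) (GX, False))"

definition rel0 :: "nat \<Rightarrow> word" where
  "rel0 n = replicate n (GX, True) @ [(GY, False), (GY, False)]"

definition Q_rels :: "nat \<Rightarrow> word list" where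
  "Q_rels n = [rel0 n, [(GX, True), (GY, True), (GX, True), (GY, False)]]"

definition regular :: "nat \<Rightarrow> word \<Rightarrow> bool" where
  "regular n R \<longleftrightarrow>
     (let NP = normal_closure FG (set [rel0 n, R]);
          NQ = normal_closure FG (set (Q_rels n))
      in \<exists>h \<in> iso (pres_group [rel0 n, R]) (pres_group (Q_rels n)).
           h (NP #>\<^bsub>FG\<^esub> gx) = NQ #>\<^bsub>FG\<^esub> gx \<and>
           h (NP #>\<^bsub>FG\<^esub> gy) = NQ #>\<^bsub>FG\<^esub> gy)"

definition Pn_rel :: "int list \<Rightarrow> int list \<Rightarrow> word" where
  "Pn_rel ns ms =
     (let ns' = ns @ [1 - sum_list ns]; ms' = ms @ [1 - sum_list ms]
      in red (concat (map (\<lambda>(a, b). xpow a @ [(GY, True)] @ xpow b @ [(GY, False)])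
                          (zip ns' ms'))))"

definition Pn :: "nat \<Rightarrow> int list \<Rightarrow> int list \<Rightarrow> word list" where
  "Pn n ns ms = [rel0 n, Pn_rel ns ms]"

definition Q_move :: "word list \<Rightarrow> word list \<Rightarrow> bool" where
  "Q_move rs rs' \<longleftrightarrow>
     (\<exists>i j. i < length rs \<and> j < length rs \<and> i \<noteq> j \<and> rs' = rs[i := wmult (rs ! i) (rs ! j)])
   \<or> (\<exists>i. i < length rs \<and> rs' = rs[i := winv (rs ! i)])
   \<or> (\<exists>i w. i < length rs \<and> w \<in> carrier FG \<and> rs' = rs[i := wmult (wmult w (rs ! i)) (winv w)])"

definition Q_equiv :: "word list \<Rightarrow> word list \<Rightarrow> bool" (infix \<open>\<simeq>\<^sub>Q\<close> 50) where
  "Q_equiv P P' \<longleftrightarrow> (\<lambda>a b. Q_move a b \<or> Q_move b a)\<^sup>*\<^sup>* P P'"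

end

theory Submission
  imports Defs
begin

text \<open>Modulo the normal closure of \<open>x\<^sup>n y\<^sup>-\<^sup>2\<close>, every word equals a product of pairs
  \<open>x\<^sup>a y x\<^sup>b y\<^sup>-\<^sup>1\<close> followed by \<open>x\<^sup>c y\<^sup>e\<close>. Two invariants pin down such a form of the
  second relator \<open>R\<close>: the homomorphism to \<open>\<int>\<close> with \<open>x \<mapsto> 2\<close>, \<open>y \<mapsto> n\<close> kills \<open>x\<^sup>n y\<^sup>-\<^sup>2\<close>,
  and regularity forces it to take the value \<open>\<plusminus>4\<close> on \<open>R\<close>, hence \<open>4\<close> after replacing \<open>R\<close> by
  \<open>R\<^sup>-\<^sup>1\<close>; and \<open>R\<close> is trivial in \<open>Q\<^sub>4\<^sub>n\<close>. This gives \<open>e = 0\<close>, \<open>\<Sigma>a + \<Sigma>b + c = 2\<close> and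
  \<open>\<Sigma>a - \<Sigma>b + c \<equiv> 0 (mod 2n)\<close>. Conjugating by \<open>x\<^sup>c\<close> and shifting one pair by a multiple
  of the central element \<open>x\<^sup>n = y\<^sup>2\<close> makes both exponent sums \<open>1\<close>, and merging pairs with a
  zero exponent (rotating cyclically where needed) yields the relator of
  \<open>P\<^sub>n(n\<^sub>1,\<dots>,n\<^sub>k; m\<^sub>1,\<dots>,m\<^sub>k)\<close>. Conjugation is a \<open>Q\<close>-move, and multiplying the second relator by
  an element of the normal closure of \<open>x\<^sup>n y\<^sup>-\<^sup>2\<close> is a sequence of \<open>Q\<close>-moves, because the
  admissible multipliers form a normal subgroup containing \<open>x\<^sup>n y\<^sup>-\<^sup>2\<close>.\<close>

section \<open>Free reduction\<close>

definition cons_cancel :: "letter \<Rightarrow> word \<Rightarrow> word" where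
  "cons_cancel a w = (case w of [] \<Rightarrow> [a] | b # u \<Rightarrow> (if b = inv_letter a then u else a # b # u))"

lemma red_Cons: "red (a # w) = cons_cancel a (red w)"
  by (simp add: cons_cancel_def)

declare red.simps(2) [simp del]

lemma red_singleton [simp]: "red [a] = [a]"
  by (simp add: red_Cons cons_cancel_def)

lemma inv_letter_inv_letter [simp]: "inv_letter (inv_letter a) = a"
  by (simp add: inv_letter_def)

lemma inv_letter_neq [simp]: "inv_letter a \<noteq> a" "a \<noteq> inv_letter a"
  by (simp_all add: inv_letter_def prod_eq_iff)

lemma reduced_Cons: "reduced (a # w) \<longleftrightarrow> reduced w \<and> (w = [] \<or> hd w \<noteq> inv_letter a)"
  by (cases w) auto

lemma reduced_snoc: "reduced (w @ [a]) \<longleftrightarrow> reduced w \<and> (w = [] \<or> a \<noteq> inv_letter (last w))"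
  by (induction w rule: reduced.induct) (auto simp: inv_letter_def)

lemma reduced_cons_cancel: "reduced w \<Longrightarrow> reduced (cons_cancel a w)"
  by (cases w) (auto simp: cons_cancel_def reduced_Cons)

lemma reduced_red: "reduced (red w)"
  by (induction w) (auto simp: red_Cons reduced_cons_cancel)

lemma red_reduced: "reduced w \<Longrightarrow> red w = w"
proof (induction w)
  case (Cons a w)
  then show ?case
    by (cases w) (auto simp: red_Cons cons_cancel_def reduced_Cons)
qed simp

lemma red_red [simp]: "red (red w) = red w"
  by (simp add: red_reduced reduced_red)

lemma cons_cancel_inv_letter: "reduced w \<Longrightarrow> cons_cancel a (cons_cancel (inv_letter a) w) = w"
  by (cases w) (auto simp: cons_cancel_def reduced_Cons split: list.splits)

lemma red_append_red_right: "red (u @ red v) = red (u @ v)"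
  by (induction u) (auto simp: red_Cons)

lemma red_cons_cancel_append:
  assumes "reduced w"
  shows "red (cons_cancel a w @ v) = cons_cancel a (red (w @ v))"
proof (cases w)
  case (Cons b u)
  show ?thesis
  proof (cases "b = inv_letter a")
    case True
    have "cons_cancel a (red (w @ v)) = cons_cancel a (cons_cancel (inv_letter a) (red (u @ v)))"
      using Cons True by (simp add: red_Cons)
    also have "\<dots> = red (u @ v)"
      by (rule cons_cancel_inv_letter[OF reduced_red])
    finally show ?thesis
      using Cons True by (simp add: cons_cancel_def)
  qed (use Cons in \<open>simp add: cons_cancel_def red_Cons\<close>)
qed (simp add: cons_cancel_def red_Cons)

lemma red_append_red_left: "red (red u @ v) = red (u @ v)"
  by (induction u) (simp_all add: red_Cons red_cons_cancel_append[OF reduced_red])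

lemma winv_Nil [simp]: "winv [] = []"
  by (simp add: winv_def)

lemma reduced_winv: "reduced w \<Longrightarrow> reduced (winv w)"
proof (induction w)
  case (Cons a w)
  have snoc: "winv (a # w) = winv w @ [inv_letter a]"
    by (simp add: winv_def)
  have "w \<noteq> [] \<Longrightarrow> last (winv w) = inv_letter (hd w)"
    by (cases w) (auto simp: winv_def)
  with Cons show ?case
    unfolding snoc reduced_snoc by (cases w) (auto simp: reduced_Cons)
qed simp

lemma red_winv_append: "red (winv w @ w) = []"
proof (induction w)
  case (Cons a w)
  have "red (inv_letter a # a # w) = red w"
    using cons_cancel_inv_letter[OF reduced_red, of "inv_letter a" w] by (simp add: red_Cons)
  then have "red (winv w @ inv_letter a # a # w) = red (winv w @ w)"
    by (metis red_append_red_right)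
  then show ?case
    using Cons by (simp add: winv_def)
qed simp

lemma carrier_FG: "carrier FG = {w. reduced w}"
  by (simp add: FG_def)

lemma mult_FG: "u \<otimes>\<^bsub>FG\<^esub> v = red (u @ v)"
  by (simp add: FG_def wmult_def)

lemma one_FG: "\<one>\<^bsub>FG\<^esub> = []"
  by (simp add: FG_def)

lemma red_carrier: "w \<in> carrier FG \<Longrightarrow> red w = w"
  by (simp add: carrier_FG red_reduced)

lemma group_FG: "group FG"
proof (rule groupI)
  fix u v w :: word
  show "u \<otimes>\<^bsub>FG\<^esub> v \<otimes>\<^bsub>FG\<^esub> w = u \<otimes>\<^bsub>FG\<^esub> (v \<otimes>\<^bsub>FG\<^esub> w)"
    by (simp add: mult_FG red_append_red_left red_append_red_right)
next
  fix w assume "w \<in> carrier FG"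
  then show "\<one>\<^bsub>FG\<^esub> \<otimes>\<^bsub>FG\<^esub> w = w"
    by (simp add: carrier_FG mult_FG one_FG red_reduced)
  show "\<exists>v\<in>carrier FG. v \<otimes>\<^bsub>FG\<^esub> w = \<one>\<^bsub>FG\<^esub>"
    by (rule bexI[of _ "red (winv w)"])
      (simp_all add: carrier_FG mult_FG one_FG reduced_red red_append_red_left red_winv_append)
qed (simp_all add: carrier_FG mult_FG one_FG reduced_red)

interpretation F: group FG
  by (rule group_FG)

lemma group_hom_FG: "group H \<Longrightarrow> f \<in> hom FG H \<Longrightarrow> group_hom FG H f"
  by (simp add: group_hom_def group_hom_axioms_def group_FG)

lemma inv_FG: "w \<in> carrier FG \<Longrightarrow> inv\<^bsub>FG\<^esub> w = winv w"
  by (rule F.inv_equality)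
    (simp_all add: carrier_FG mult_FG one_FG reduced_winv red_winv_append)

lemma red_append_FG: "red (u @ v) = red u \<otimes>\<^bsub>FG\<^esub> red v"
  by (simp add: mult_FG red_append_red_left red_append_red_right)

lemma Cons_FG: "reduced (a # w) \<Longrightarrow> a # w = [a] \<otimes>\<^bsub>FG\<^esub> w"
  by (simp add: mult_FG red_reduced)

lemma snoc_FG: "reduced (w @ [a]) \<Longrightarrow> w @ [a] = w \<otimes>\<^bsub>FG\<^esub> [a]"
  by (simp add: mult_FG red_reduced)

lemma gx_carrier [simp]: "gx \<in> carrier FG" and gy_carrier [simp]: "gy \<in> carrier FG"
  by (simp_all add: gx_def gy_def carrier_FG)

lemma inv_gx: "inv\<^bsub>FG\<^esub> gx = [(GX, False)]" and inv_gy: "inv\<^bsub>FG\<^esub> gy = [(GY, False)]"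
  by (simp_all only: inv_FG[OF gx_carrier] inv_FG[OF gy_carrier])
    (simp_all add: gx_def gy_def winv_def inv_letter_def)

lemma letter_FG_cases: "[a] \<in> {gx, inv\<^bsub>FG\<^esub> gx, gy, inv\<^bsub>FG\<^esub> gy}"
proof -
  obtain g b where "a = (g, b)"
    by (cases a)
  then show ?thesis
    unfolding inv_gx inv_gy by (cases g; cases b) (simp_all add: gx_def gy_def)
qed

lemma hom_FG_eqI:
  assumes "group H" and f: "f \<in> hom FG H" and g: "g \<in> hom FG H"
    and "f gx = g gx" and "f gy = g gy" and "w \<in> carrier FG"
  shows "f w = g w"
  using \<open>w \<in> carrier FG\<close>
proof (induction w)
  interpret f: group_hom FG H f
    using assms(1) f by (rule group_hom_FG)
  interpret g: group_hom FG H g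
    using assms(1) g by (rule group_hom_FG)
  {
    case Nil
    show ?case using f.hom_one g.hom_one by (simp add: one_FG)
  next
    case (Cons a w)
    then have w: "w \<in> carrier FG" and a: "[a] \<in> carrier FG"
      by (simp_all add: carrier_FG reduced_Cons)
    have "a # w = [a] \<otimes>\<^bsub>FG\<^esub> w"
      using Cons.prems by (intro Cons_FG) (simp add: carrier_FG)
    moreover have "f [a] = g [a]"
      using letter_FG_cases[of a] assms(4,5) by auto
    ultimately show ?case
      using a w Cons.IH[OF w] by simp
  }
qed

lemma reduced_replicate: "reduced (replicate m a)"
  by (induction m) (auto simp: reduced_Cons hd_replicate)

lemma gx_int_pow: "gx [^]\<^bsub>FG\<^esub> (k::int) = xpow k"
proof -
  have pow: "gx [^]\<^bsub>FG\<^esub> m = replicate m (GX, True)" for m :: nat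
  proof (induction m)
    case (Suc m)
    then have "gx [^]\<^bsub>FG\<^esub> Suc m = red (replicate m (GX, True) @ [(GX, True)])"
      by (simp add: mult_FG gx_def)
    then show ?case
      by (metis red_reduced reduced_replicate replicate_Suc replicate_append_same)
  qed (simp add: one_FG)
  show ?thesis
    unfolding int_pow_def2 xpow_def
    by (simp add: pow inv_FG carrier_FG reduced_replicate winv_def inv_letter_def)
qed

lemma xpow_carrier [simp]: "xpow k \<in> carrier FG"
  by (metis F.int_pow_closed gx_carrier gx_int_pow)

lemma rel0_FG: "rel0 n = gx [^]\<^bsub>FG\<^esub> n \<otimes>\<^bsub>FG\<^esub> inv\<^bsub>FG\<^esub> gy \<otimes>\<^bsub>FG\<^esub> inv\<^bsub>FG\<^esub> gy"
proof -
  have "reduced (rel0 n)"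
    by (induction n) (auto simp: rel0_def reduced_Cons inv_letter_def hd_append)
  then have "rel0 n = red (xpow (int n) @ [(GY, False)] @ [(GY, False)])"
    by (simp add: rel0_def xpow_def red_reduced)
  also have "\<dots> = gx [^]\<^bsub>FG\<^esub> n \<otimes>\<^bsub>FG\<^esub> (inv\<^bsub>FG\<^esub> gy \<otimes>\<^bsub>FG\<^esub> inv\<^bsub>FG\<^esub> gy)"
    by (simp only: red_append_FG) (simp add: red_carrier inv_gy gx_int_pow[symmetric] int_pow_int)
  finally show ?thesis
    by (simp add: F.m_assoc)
qed

lemma rel0_carrier [simp]: "rel0 n \<in> carrier FG"
  by (simp add: rel0_FG)

definition qrel :: word where
  "qrel = [(GX, True), (GY, True), (GX, True), (GY, False)]"

lemma Q_rels_eq: "Q_rels n = [rel0 n, qrel]"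
  by (simp add: Q_rels_def qrel_def)

lemma qrel_carrier [simp]: "qrel \<in> carrier FG"
  by (simp add: qrel_def carrier_FG inv_letter_def)

lemma normal_closure_subset: "S \<subseteq> normal_closure G S"
  unfolding normal_closure_def by blast

lemma normal_closure_least: "N \<lhd> G \<Longrightarrow> S \<subseteq> N \<Longrightarrow> normal_closure G S \<subseteq> N"
  unfolding normal_closure_def by blast

lemma (in group) normal_closure_normal:
  assumes "S \<subseteq> carrier G"
  shows "normal_closure G S \<lhd> G"
proof -
  let ?A = "{N. N \<lhd> G \<and> S \<subseteq> N}"
  have "carrier G \<in> ?A"
    using assms normal_self by simp
  then have "subgroup (\<Inter>?A) G"
    by (intro subgroups_Inter) (auto simp: normal_imp_subgroup)
  moreover have "x \<otimes> h \<otimes> inv x \<in> \<Inter>?A" if "x \<in> carrier G" and "h \<in> \<Inter>?A" for x h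
    using that by (auto simp: normal.inv_op_closed2)
  ultimately show ?thesis
    unfolding normal_closure_def by (auto simp: normal_inv_iff)
qed

lemma (in group) normal_closure_subset_kernel:
  assumes "group H" and "f \<in> hom G H" and "S \<subseteq> carrier G" and "\<forall>s\<in>S. f s = \<one>\<^bsub>H\<^esub>"
  shows "normal_closure G S \<subseteq> kernel G H f"
proof (rule normal_closure_least)
  show "kernel G H f \<lhd> G"
    using assms(1,2) by (intro group_hom.normal_kernel) (simp add: group_hom_def group_hom_axioms_def is_group)
qed (use assms(3,4) in \<open>auto simp: kernel_def\<close>)

lemma (in normal) rcos_eq_imp_mult:
  assumes "H #> w = H #> v" and "v \<in> carrier G" and "w \<in> carrier G"
  shows "\<exists>c\<in>H. w = v \<otimes> c"
proof -
  have "w \<otimes> inv v \<in> H"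
    using assms by (metis is_group rcos_module_imp rcos_self subgroup_axioms)
  then have "inv v \<otimes> (w \<otimes> inv v) \<otimes> v \<in> H"
    using assms(2) by (rule inv_op_closed1[rotated])
  moreover have "w = v \<otimes> (inv v \<otimes> (w \<otimes> inv v) \<otimes> v)"
    using assms(2,3) by (simp add: m_assoc) (simp add: m_assoc[symmetric])
  ultimately show ?thesis ..
qed

lemma Q_equiv_refl [simp]: "P \<simeq>\<^sub>Q P"
  by (simp add: Q_equiv_def)

lemma Q_equiv_sym: "P \<simeq>\<^sub>Q P' \<Longrightarrow> P' \<simeq>\<^sub>Q P"
proof -
  have "symp (\<lambda>a b. Q_move a b \<or> Q_move b a)"
    by (auto intro: sympI)
  then show "P \<simeq>\<^sub>Q P' \<Longrightarrow> P' \<simeq>\<^sub>Q P"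
    unfolding Q_equiv_def by (blast dest: sympD[OF symp_rtranclp])
qed

lemma Q_equiv_trans [trans]: "P \<simeq>\<^sub>Q P' \<Longrightarrow> P' \<simeq>\<^sub>Q P'' \<Longrightarrow> P \<simeq>\<^sub>Q P''"
  unfolding Q_equiv_def by (rule rtranclp_trans)

lemma Q_move_imp_Q_equiv: "Q_move P P' \<Longrightarrow> P \<simeq>\<^sub>Q P'"
  unfolding Q_equiv_def by auto

lemma Q_equiv_mult: "[a, b] \<simeq>\<^sub>Q [a, b \<otimes>\<^bsub>FG\<^esub> a]"
  by (rule Q_move_imp_Q_equiv, unfold Q_move_def, intro disjI1 exI[of _ 1] exI[of _ 0]) (simp add: wmult_def mult_FG)

lemma Q_equiv_inv: "b \<in> carrier FG \<Longrightarrow> [a, b] \<simeq>\<^sub>Q [a, inv\<^bsub>FG\<^esub> b]"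
  by (rule Q_move_imp_Q_equiv, unfold Q_move_def, intro disjI2 disjI1 exI[of _ 1]) (simp add: inv_FG)

lemma Q_equiv_conj: "w \<in> carrier FG \<Longrightarrow> [a, b] \<simeq>\<^sub>Q [a, w \<otimes>\<^bsub>FG\<^esub> b \<otimes>\<^bsub>FG\<^esub> inv\<^bsub>FG\<^esub> w]"
  by (rule Q_move_imp_Q_equiv, unfold Q_move_def, intro disjI2 exI[of _ 1] exI[of _ w]) (simp add: wmult_def mult_FG inv_FG)

definition Q_multipliers :: "word \<Rightarrow> word set" where
  "Q_multipliers r = {c \<in> carrier FG. \<forall>R\<in>carrier FG. [r, R] \<simeq>\<^sub>Q [r, R \<otimes>\<^bsub>FG\<^esub> c]}"

lemma subgroup_Q_multipliers: "subgroup (Q_multipliers r) FG"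
proof (rule F.subgroupI)
  show "Q_multipliers r \<noteq> {}"
    using F.one_closed by (force simp: Q_multipliers_def)
next
  fix c assume c: "c \<in> Q_multipliers r"
  then have "[r, R \<otimes>\<^bsub>FG\<^esub> inv\<^bsub>FG\<^esub> c] \<simeq>\<^sub>Q [r, R]" if "R \<in> carrier FG" for R
    using that by (auto simp: Q_multipliers_def F.m_assoc dest: bspec[of _ _ "R \<otimes>\<^bsub>FG\<^esub> inv\<^bsub>FG\<^esub> c"])
  then show "inv\<^bsub>FG\<^esub> c \<in> Q_multipliers r"
    using c by (auto simp: Q_multipliers_def intro: Q_equiv_sym)
next
  fix c d assume "c \<in> Q_multipliers r" and "d \<in> Q_multipliers r"
  then show "c \<otimes>\<^bsub>FG\<^esub> d \<in> Q_multipliers r"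
    unfolding Q_multipliers_def by (auto simp: F.m_assoc[symmetric] intro: Q_equiv_trans)
qed (auto simp: Q_multipliers_def)

lemma Q_multipliers_conj:
  assumes c: "c \<in> Q_multipliers r" and g: "g \<in> carrier FG"
  shows "g \<otimes>\<^bsub>FG\<^esub> c \<otimes>\<^bsub>FG\<^esub> inv\<^bsub>FG\<^esub> g \<in> Q_multipliers r"
proof -
  have c_carrier: "c \<in> carrier FG"
    using c by (simp add: Q_multipliers_def)
  have "[r, R] \<simeq>\<^sub>Q [r, R \<otimes>\<^bsub>FG\<^esub> (g \<otimes>\<^bsub>FG\<^esub> c \<otimes>\<^bsub>FG\<^esub> inv\<^bsub>FG\<^esub> g)]" if R: "R \<in> carrier FG" for R
  proof -
    have "[r, R] \<simeq>\<^sub>Q [r, inv\<^bsub>FG\<^esub> g \<otimes>\<^bsub>FG\<^esub> R \<otimes>\<^bsub>FG\<^esub> g]"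
      using Q_equiv_conj[of "inv\<^bsub>FG\<^esub> g"] g by simp
    also have "\<dots> \<simeq>\<^sub>Q [r, inv\<^bsub>FG\<^esub> g \<otimes>\<^bsub>FG\<^esub> R \<otimes>\<^bsub>FG\<^esub> g \<otimes>\<^bsub>FG\<^esub> c]"
      using c g R by (simp add: Q_multipliers_def)
    also have "\<dots> \<simeq>\<^sub>Q [r, g \<otimes>\<^bsub>FG\<^esub> (inv\<^bsub>FG\<^esub> g \<otimes>\<^bsub>FG\<^esub> R \<otimes>\<^bsub>FG\<^esub> g \<otimes>\<^bsub>FG\<^esub> c) \<otimes>\<^bsub>FG\<^esub> inv\<^bsub>FG\<^esub> g]"
      using g by (rule Q_equiv_conj)
    also have "g \<otimes>\<^bsub>FG\<^esub> (inv\<^bsub>FG\<^esub> g \<otimes>\<^bsub>FG\<^esub> R \<otimes>\<^bsub>FG\<^esub> g \<otimes>\<^bsub>FG\<^esub> c) \<otimes>\<^bsub>FG\<^esub> inv\<^bsub>FG\<^esub> g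
        = R \<otimes>\<^bsub>FG\<^esub> (g \<otimes>\<^bsub>FG\<^esub> c \<otimes>\<^bsub>FG\<^esub> inv\<^bsub>FG\<^esub> g)"
      using g R c_carrier by (simp add: F.m_assoc[symmetric])
    finally show ?thesis .
  qed
  then show ?thesis
    using g c_carrier by (simp add: Q_multipliers_def)
qed

lemma normal_Q_multipliers: "Q_multipliers r \<lhd> FG"
  using subgroup_Q_multipliers Q_multipliers_conj by (auto simp: F.normal_inv_iff)

lemma Q_equiv_mult_normal_closure:
  assumes "r \<in> carrier FG" and "R \<in> carrier FG" and "c \<in> normal_closure FG {r}"
  shows "[r, R] \<simeq>\<^sub>Q [r, R \<otimes>\<^bsub>FG\<^esub> c]"
proof -
  have "r \<in> Q_multipliers r"
    using assms(1) Q_equiv_mult by (simp add: Q_multipliers_def)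
  then have "normal_closure FG {r} \<subseteq> Q_multipliers r"
    by (simp add: normal_closure_least normal_Q_multipliers)
  then show ?thesis
    using assms(2,3) by (auto simp: Q_multipliers_def)
qed

lemma (in group) rcos_eq_self_iff: "subgroup H G \<Longrightarrow> x \<in> carrier G \<Longrightarrow> H #> x = H \<longleftrightarrow> x \<in> H"
  using coset_join1 coset_join2 by blast

lemma (in group) normal_eq_if_iso_Mod:
  assumes M: "M \<lhd> G" and N: "N \<lhd> G" and h: "h \<in> iso (G Mod M) (G Mod N)"
    and compatible: "\<And>w. w \<in> carrier G \<Longrightarrow> h (M #> w) = N #> w"
  shows "M = N"
proof -
  interpret M: normal M G
    by (rule M)
  interpret N: normal N G
    by (rule N)
  interpret h: group_hom "G Mod M" "G Mod N" h
    using h by (simp add: group_hom_def group_hom_axioms_def iso_def M.factorgroup_is_group N.factorgroup_is_group)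
  have "w \<in> M \<longleftrightarrow> w \<in> N" if w: "w \<in> carrier G" for w
  proof -
    have "w \<in> M \<longleftrightarrow> M #> w = M"
      using w M.subgroup_axioms by (simp add: rcos_eq_self_iff)
    also have "\<dots> \<longleftrightarrow> h (M #> w) = h M"
      using h w h.G.one_closed
      by (intro inj_on_eq_iff[symmetric]) (auto simp: iso_def bij_betw_def carrier_FactGroup)
    also have "\<dots> \<longleftrightarrow> w \<in> N"
      using h.hom_one w N.subgroup_axioms by (simp add: compatible rcos_eq_self_iff)
    finally show ?thesis .
  qed
  then show ?thesis
    using M.subset N.subset by blast
qed

lemma regular_imp_normal_closure_eq:
  assumes "regular n R" and "R \<in> carrier FG"
  shows "normal_closure FG {rel0 n, R} = normal_closure FG {rel0 n, qrel}"
proof -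
  define NP where "NP = normal_closure FG {rel0 n, R}"
  define NQ where "NQ = normal_closure FG {rel0 n, qrel}"
  have P: "NP \<lhd> FG" and Q: "NQ \<lhd> FG"
    unfolding NP_def NQ_def using assms(2) by (auto intro: F.normal_closure_normal)
  obtain h where h: "h \<in> iso (FG Mod NP) (FG Mod NQ)"
    and "h (NP #>\<^bsub>FG\<^esub> gx) = NQ #>\<^bsub>FG\<^esub> gx" and "h (NP #>\<^bsub>FG\<^esub> gy) = NQ #>\<^bsub>FG\<^esub> gy"
    using assms(1) by (auto simp: regular_def Let_def pres_group_def Q_rels_eq NP_def NQ_def)
  moreover have "(\<lambda>w. h (NP #>\<^bsub>FG\<^esub> w)) \<in> hom FG (FG Mod NQ)"
    using hom_compose[OF normal.r_coset_hom_Mod[OF P] iso_imp_homomorphism[OF h]] by (simp add: comp_def)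
  ultimately have "h (NP #>\<^bsub>FG\<^esub> w) = NQ #>\<^bsub>FG\<^esub> w" if "w \<in> carrier FG" for w
    using hom_FG_eqI[OF normal.factorgroup_is_group[OF Q] _ normal.r_coset_hom_Mod[OF Q]] that by blast
  then show ?thesis
    unfolding NP_def[symmetric] NQ_def[symmetric] by (rule F.normal_eq_if_iso_Mod[OF P Q h])
qed

section \<open>The weight homomorphism\<close>

definition letter_weight :: "nat \<Rightarrow> letter \<Rightarrow> int" where
  "letter_weight n a =
     (case a of (GX, b) \<Rightarrow> (if b then 2 else -2) | (GY, b) \<Rightarrow> (if b then int n else - int n))"

definition weight :: "nat \<Rightarrow> word \<Rightarrow> int" where
  "weight n w = sum_list (map (letter_weight n) w)"

lemma weight_Nil [simp]: "weight n [] = 0"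
  and weight_Cons [simp]: "weight n (a # w) = letter_weight n a + weight n w"
  and weight_append [simp]: "weight n (u @ v) = weight n u + weight n v"
  by (simp_all add: weight_def)

lemma letter_weight_inv_letter [simp]: "letter_weight n (inv_letter a) = - letter_weight n a"
  by (cases a) (auto simp: letter_weight_def inv_letter_def split: gen.splits)

lemma weight_red [simp]: "weight n (red w) = weight n w"
proof (induction w)
  case (Cons a w)
  then show ?case
    by (cases "red w") (auto simp: red_Cons cons_cancel_def)
qed simp

lemma weight_mult: "weight n (u \<otimes>\<^bsub>FG\<^esub> v) = weight n u + weight n v"
  by (simp add: mult_FG)

lemma weight_winv: "weight n (winv w) = - weight n w"
  by (induction w) (simp_all add: winv_def)

lemma weight_inv: "w \<in> carrier FG \<Longrightarrow> weight n (inv\<^bsub>FG\<^esub> w) = - weight n w"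
  by (simp add: inv_FG weight_winv)

lemma weight_xpow: "weight n (xpow k) = 2 * k"
  by (simp add: xpow_def weight_def letter_weight_def sum_list_replicate)

lemma weight_gy: "weight n gy = int n"
  by (simp add: gy_def letter_weight_def)

lemma weight_rel0: "weight n (rel0 n) = 0"
  by (simp add: rel0_def weight_def letter_weight_def sum_list_replicate)

lemma weight_qrel: "weight n qrel = 4"
  by (simp add: qrel_def letter_weight_def)

lemma weight_dvd_normal_closure:
  assumes "S \<subseteq> carrier FG" and "\<forall>s\<in>S. d dvd weight n s" and "w \<in> normal_closure FG S"
  shows "d dvd weight n w"
proof -
  let ?D = "{w \<in> carrier FG. d dvd weight n w}"
  have "subgroup ?D FG"
    by (rule F.subgroupI) (auto simp: weight_mult weight_inv one_FG intro!: exI[of _ "\<one>\<^bsub>FG\<^esub>"])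
  then have "?D \<lhd> FG"
    by (auto simp: F.normal_inv_iff weight_mult weight_inv)
  with assms show ?thesis
    using normal_closure_least[of ?D FG S] by auto
qed

lemma weight_regular_relator:
  assumes "R \<in> carrier FG" and eq: "normal_closure FG {rel0 n, R} = normal_closure FG {rel0 n, qrel}"
  shows "\<bar>weight n R\<bar> = 4"
proof -
  have "4 dvd weight n R"
    using weight_dvd_normal_closure[of "{rel0 n, qrel}" 4 n R] normal_closure_subset[of "{rel0 n, R}" FG]
    by (simp add: eq weight_rel0 weight_qrel)
  moreover have "weight n R dvd 4"
    using weight_dvd_normal_closure[of "{rel0 n, R}" "weight n R" n qrel] assms(1)
      normal_closure_subset[of "{rel0 n, qrel}" FG]
    by (simp add: eq[symmetric] weight_rel0 weight_qrel)
  ultimately show ?thesis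
    by (simp add: zdvd_antisym_abs)
qed

section \<open>A model of the dicyclic group\<close>

text \<open>The pair \<open>(k, e)\<close> stands for \<open>x\<^sup>k y\<^sup>e\<close> (with \<open>e\<close> read as 0 or 1) in
  \<open>Q\<^sub>4\<^sub>n\<close>; the multiplication uses \<open>y x = x\<^sup>-\<^sup>1 y\<close> and \<open>y\<^sup>2 = x\<^sup>n\<close>.\<close>

definition dic_mult :: "nat \<Rightarrow> int \<times> bool \<Rightarrow> int \<times> bool \<Rightarrow> int \<times> bool" where
  "dic_mult n p q =
     ((fst p + (if snd p then - fst q else fst q) + (if snd p \<and> snd q then int n else 0)) mod (2 * int n),
      snd p \<noteq> snd q)"

definition dicyclic :: "nat \<Rightarrow> (int \<times> bool) monoid" where
  "dicyclic n = \<lparr>carrier = {p. 0 \<le> fst p \<and> fst p < 2 * int n}, monoid.mult = dic_mult n, one = (0, False)\<rparr>"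

lemma dicyclic_simps [simp]:
  "carrier (dicyclic n) = {p. 0 \<le> fst p \<and> fst p < 2 * int n}"
  "p \<otimes>\<^bsub>dicyclic n\<^esub> q = dic_mult n p q"
  "\<one>\<^bsub>dicyclic n\<^esub> = (0, False)"
  by (simp_all add: dicyclic_def)

lemma dic_mult_assoc: "dic_mult n (dic_mult n p q) r = dic_mult n p (dic_mult n q r)"
proof -
  obtain s e t f u g where p: "p = (s, e)" and q: "q = (t, f)" and r: "r = (u, g)"
    by (cases p, cases q, cases r) simp
  show ?thesis
    unfolding p q r
    by (cases e; cases f; cases g; simp add: dic_mult_def mod_simps; rule mod_eq_dvd_iff[THEN iffD2];
        simp add: algebra_simps minus_div_mult_eq_mod[symmetric])
qed

lemma group_dicyclic: "n \<ge> 1 \<Longrightarrow> group (dicyclic n)"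
proof (rule groupI)
  fix p assume n: "n \<ge> 1" and "p \<in> carrier (dicyclic n)"
  obtain k e where p: "p = (k, e)"
    by (cases p)
  show "\<exists>q\<in>carrier (dicyclic n). q \<otimes>\<^bsub>dicyclic n\<^esub> p = \<one>\<^bsub>dicyclic n\<^esub>"
  proof (cases e)
    case True
    have "((k - int n) mod (2 * int n) - k + int n) mod (2 * int n) = 0"
      by (rule dvd_imp_mod_0) (simp add: algebra_simps minus_div_mult_eq_mod[symmetric])
    then show ?thesis
      using n True by (intro bexI[of _ "((k - int n) mod (2 * int n), True)"]) (auto simp: p dic_mult_def)
  next
    case False
    then show ?thesis
      using n by (intro bexI[of _ "((- k) mod (2 * int n), False)"]) (auto simp: p dic_mult_def mod_simps)
  qed
next
  fix p q r
  show "p \<otimes>\<^bsub>dicyclic n\<^esub> q \<otimes>\<^bsub>dicyclic n\<^esub> r = p \<otimes>\<^bsub>dicyclic n\<^esub> (q \<otimes>\<^bsub>dicyclic n\<^esub> r)"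
    by (simp add: dic_mult_assoc)
  assume "p \<in> carrier (dicyclic n)"
  then show "\<one>\<^bsub>dicyclic n\<^esub> \<otimes>\<^bsub>dicyclic n\<^esub> p = p"
    by (cases p) (simp add: dic_mult_def)
qed (simp_all add: dic_mult_def)

definition dic_letter :: "nat \<Rightarrow> letter \<Rightarrow> int \<times> bool" where
  "dic_letter n a =
     (case a of (GX, b) \<Rightarrow> ((if b then 1 else -1) mod (2 * int n), False)
              | (GY, b) \<Rightarrow> (if b then (0, True) else (int n, True)))"

definition dic_eval :: "nat \<Rightarrow> word \<Rightarrow> int \<times> bool" where
  "dic_eval n w = foldr (\<lambda>a p. dic_mult n (dic_letter n a) p) w (0, False)"

lemma dic_eval_Nil [simp]: "dic_eval n [] = (0, False)"
  and dic_eval_Cons [simp]: "dic_eval n (a # w) = dic_mult n (dic_letter n a) (dic_eval n w)"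
  by (simp_all add: dic_eval_def)

context
  fixes n :: nat
  assumes n: "n \<ge> 1"
begin

interpretation D: group "dicyclic n"
  by (rule group_dicyclic[OF n])

lemma dic_eval_carrier: "dic_eval n w \<in> carrier (dicyclic n)"
  by (induction w) (use n in \<open>auto simp: dic_mult_def\<close>)

lemma dic_mult_one: "dic_mult n (0, False) (dic_eval n w) = dic_eval n w"
  using D.l_one[OF dic_eval_carrier] by simp

lemma dic_eval_red: "dic_eval n (red w) = dic_eval n w"
proof (induction w)
  case (Cons a w)
  have "dic_mult n (dic_letter n a) (dic_letter n (inv_letter a)) = (0, False)"
    by (cases a; rename_tac g b; case_tac g; case_tac b)
      (simp_all add: dic_letter_def inv_letter_def dic_mult_def mod_simps)
  then have "dic_eval n (cons_cancel a v) = dic_eval n (a # v)" for v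
    by (cases v) (auto simp: cons_cancel_def dic_mult_assoc[symmetric] dic_mult_one)
  then show ?case
    using Cons by (simp add: red_Cons)
qed simp

lemma dic_eval_append: "dic_eval n (u @ v) = dic_mult n (dic_eval n u) (dic_eval n v)"
  by (induction u) (simp_all add: dic_mult_one dic_mult_assoc)

lemma hom_dic_eval: "dic_eval n \<in> hom FG (dicyclic n)"
  by (intro homI dic_eval_carrier) (simp add: mult_FG dic_eval_red dic_eval_append)

lemma dic_eval_mult: "dic_eval n (u \<otimes>\<^bsub>FG\<^esub> v) = dic_mult n (dic_eval n u) (dic_eval n v)"
  by (simp add: mult_FG dic_eval_red dic_eval_append)

lemma dic_eval_xpow: "dic_eval n (xpow k) = (k mod (2 * int n), False)"
proof -
  have "dic_eval n (replicate m (GX, b)) = ((if b then int m else - int m) mod (2 * int n), False)" for m b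
    by (induction m) (simp_all add: dic_letter_def dic_mult_def mod_simps)
  then show ?thesis
    by (simp add: xpow_def)
qed

lemma dic_eval_gy: "dic_eval n gy = (0, True)"
  using n by (simp add: gy_def dic_letter_def dic_mult_def)

lemma dic_eval_inv_gy: "dic_eval n (inv\<^bsub>FG\<^esub> gy) = (int n, True)"
  using n by (simp add: inv_gy dic_letter_def dic_mult_def)

lemma dic_eval_rel0: "dic_eval n (rel0 n) = (0, False)"
  using dic_eval_xpow[of "int n"] n
  by (simp add: rel0_def xpow_def dic_eval_append dic_letter_def dic_mult_def mod_simps)

lemma dic_eval_qrel: "dic_eval n qrel = (0, False)"
  by (simp add: qrel_def dic_letter_def dic_mult_def mod_simps)

lemma dic_eval_normal_closure:
  assumes "S \<subseteq> carrier FG" and "\<forall>s\<in>S. dic_eval n s = (0, False)" and "w \<in> normal_closure FG S"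
  shows "dic_eval n w = (0, False)"
  using F.normal_closure_subset_kernel[OF D.group_axioms hom_dic_eval] assms
  by (auto simp: kernel_def)

end

section \<open>Products of pairs in a group\<close>

lemma (in group) inv_mult_cancel_left [simp]:
  "y \<in> carrier G \<Longrightarrow> z \<in> carrier G \<Longrightarrow> inv y \<otimes> (y \<otimes> z) = z"
  by (simp add: m_assoc[symmetric])

lemma (in group) conj_mult:
  assumes "g \<in> carrier G" and "h \<in> carrier G" and "k \<in> carrier G"
  shows "(k \<otimes> h) \<otimes> g \<otimes> inv (k \<otimes> h) = k \<otimes> (h \<otimes> g \<otimes> inv h) \<otimes> inv k"
  using assms by (simp add: inv_mult_group m_assoc)

definition pair_prod :: "('a, 'b) monoid_scheme \<Rightarrow> 'a \<Rightarrow> 'a \<Rightarrow> (int \<times> int) list \<Rightarrow> 'a" where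
  "pair_prod G x y L =
     foldr (\<lambda>(a, b) p. x [^]\<^bsub>G\<^esub> a \<otimes>\<^bsub>G\<^esub> y \<otimes>\<^bsub>G\<^esub> x [^]\<^bsub>G\<^esub> b \<otimes>\<^bsub>G\<^esub> inv\<^bsub>G\<^esub> y \<otimes>\<^bsub>G\<^esub> p) L \<one>\<^bsub>G\<^esub>"

definition pair_form ::
    "('a, 'b) monoid_scheme \<Rightarrow> 'a \<Rightarrow> 'a \<Rightarrow> (int \<times> int) list \<Rightarrow> int \<Rightarrow> bool \<Rightarrow> 'a" where
  "pair_form G x y L c e = pair_prod G x y L \<otimes>\<^bsub>G\<^esub> x [^]\<^bsub>G\<^esub> c \<otimes>\<^bsub>G\<^esub> (if e then y else \<one>\<^bsub>G\<^esub>)"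

lemma pair_prod_Nil [simp]: "pair_prod G x y [] = \<one>\<^bsub>G\<^esub>"
  and pair_prod_Cons [simp]: "pair_prod G x y ((a, b) # L) =
    x [^]\<^bsub>G\<^esub> a \<otimes>\<^bsub>G\<^esub> y \<otimes>\<^bsub>G\<^esub> x [^]\<^bsub>G\<^esub> b \<otimes>\<^bsub>G\<^esub> inv\<^bsub>G\<^esub> y \<otimes>\<^bsub>G\<^esub> pair_prod G x y L"
  by (simp_all add: pair_prod_def)

locale xy_group = group G for G (structure) +
  fixes x y :: 'a
  assumes x_closed [simp]: "x \<in> carrier G" and y_closed [simp]: "y \<in> carrier G"
begin

lemma pair_prod_closed [simp]: "pair_prod G x y L \<in> carrier G"
  by (induction L) auto

lemma pair_form_closed [simp]: "pair_form G x y L c e \<in> carrier G"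
  by (simp add: pair_form_def)

lemma pair_prod_append: "pair_prod G x y (L @ M) = pair_prod G x y L \<otimes> pair_prod G x y M"
  by (induction L) (auto simp: m_assoc)

lemma pair_prod_merge_snd_zero: "pair_prod G x y [(a, 0), (a', b')] = pair_prod G x y [(a + a', b')]"
  by (simp add: m_assoc int_pow_mult)

lemma pair_prod_merge_fst_zero: "pair_prod G x y [(a, b), (0, b')] = pair_prod G x y [(a, b + b')]"
  by (simp add: m_assoc int_pow_mult)

lemma pair_prod_cong_infix:
  "pair_prod G x y M = pair_prod G x y M' \<Longrightarrow>
     pair_prod G x y (A @ M @ B) = pair_prod G x y (A @ M' @ B)"
  by (simp add: pair_prod_append)

lemma pair_prod_rotate:
  "\<exists>h\<in>carrier G. h \<otimes> pair_prod G x y (L @ M) \<otimes> inv h = pair_prod G x y (M @ L)"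
proof
  show "inv (pair_prod G x y L) \<otimes> pair_prod G x y (L @ M) \<otimes> inv (inv (pair_prod G x y L))
      = pair_prod G x y (M @ L)"
    by (simp add: pair_prod_append m_assoc)
qed simp

lemma x_pow_mult_pair_prod:
  "x [^] c \<otimes> pair_prod G x y ((a, b) # L) = pair_prod G x y ((c + a, b) # L)"
  by (simp add: m_assoc[symmetric] int_pow_mult)

lemma pair_form_mult_x_pow:
  "pair_form G x y L c False \<otimes> x [^] d = pair_form G x y L (c + d) False"
  "pair_form G x y L c True \<otimes> x [^] d = pair_form G x y (L @ [(c, d)]) 0 True"
  by (simp_all add: pair_form_def pair_prod_append m_assoc int_pow_mult)

lemma pair_form_mult_y_False: "pair_form G x y L c False \<otimes> y = pair_form G x y L c True"
  and pair_form_mult_inv_y_True: "pair_form G x y L c True \<otimes> inv y = pair_form G x y L c False"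
  by (simp_all add: pair_form_def m_assoc)

end

lemma (in group_hom) hom_pair_prod:
  assumes "x \<in> carrier G" and "y \<in> carrier G"
  shows "h (pair_prod G x y L) = pair_prod H (h x) (h y) L"
proof -
  interpret xy_group G x y
    using assms by unfold_locales
  show ?thesis
  proof (induction L)
    case (Cons p L)
    then show ?case
      by (cases p) (simp add: hom_int_pow)
  qed simp
qed

lemma (in group_hom) hom_pair_form:
  assumes "x \<in> carrier G" and "y \<in> carrier G"
  shows "h (pair_form G x y L c e) = pair_form H (h x) (h y) L c e"
proof -
  interpret xy_group G x y
    using assms by unfold_locales
  show ?thesis
    by (simp add: pair_form_def hom_pair_prod hom_int_pow)
qed

definition Pn_pairs :: "int list \<Rightarrow> int list \<Rightarrow> (int \<times> int) list" where
  "Pn_pairs ns ms = zip (ns @ [1 - sum_list ns]) (ms @ [1 - sum_list ms])"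

text \<open>The last pair plays the role of \<open>(n\<^sub>k\<^sub>+\<^sub>1, m\<^sub>k\<^sub>+\<^sub>1)\<close>, which may vanish.\<close>

definition admissible :: "(int \<times> int) list \<Rightarrow> bool" where
  "admissible L \<longleftrightarrow> L \<noteq> [] \<and> (\<forall>i < length L - 1. fst (L ! i) \<noteq> 0 \<and> snd (L ! i) \<noteq> 0)"

lemma not_admissible_cases:
  assumes "L \<noteq> []" and "\<not> admissible L"
  obtains (snd_zero) A a a' b' B where "L = A @ (a, 0) # (a', b') # B"
    | (fst_zero) A a b b' B where "L = A @ (a, b) # (0, b') # B"
    | (head_fst_zero) b M where "L = (0, b) # M" and "M \<noteq> []"
proof -
  from assms obtain i where i: "i < length L - 1" and zero: "fst (L ! i) = 0 \<or> snd (L ! i) = 0"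
    unfolding admissible_def by blast
  have split_at: "L = take j L @ L ! j # L ! Suc j # drop (Suc (Suc j)) L" if "j < length L - 1" for j
    using that by (metis Cons_nth_drop_Suc Suc_lessD id_take_nth_drop less_diff_conv add.commute plus_1_eq_Suc)
  show thesis
  proof (cases "snd (L ! i) = 0")
    case True
    then show thesis
      using split_at[OF i] snd_zero by (metis prod.collapse)
  next
    case False
    with zero have fst: "fst (L ! i) = 0"
      by simp
    show thesis
    proof (cases i)
      case 0
      then show thesis
        using split_at[OF i] fst head_fst_zero by (metis append_Nil list.discI prod.collapse take_0)
    next
      case (Suc j)
      then show thesis
        using split_at[of j] i fst fst_zero by (metis Suc_lessD prod.collapse)
    qed
  qed
qed

lemma admissible_eq_Pn_pairs:
  assumes "admissible L" and "sum_list (map fst L) = 1" and "sum_list (map snd L) = 1"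
  obtains ns ms where "length ns = length ms" and "\<forall>i<length ns. ns ! i \<noteq> 0 \<and> ms ! i \<noteq> 0"
    and "L = Pn_pairs ns ms"
proof
  define B where "B = butlast L"
  obtain p q where pq: "last L = (p, q)"
    by (cases "last L")
  have L: "L = B @ [(p, q)]"
    using assms(1) pq append_butlast_last_id[of L] by (simp add: B_def admissible_def)
  show "length (map fst B) = length (map snd B)"
    by simp
  show "\<forall>i<length (map fst B). map fst B ! i \<noteq> 0 \<and> map snd B ! i \<noteq> 0"
    using assms(1) by (auto simp: admissible_def B_def nth_butlast)
  show "L = Pn_pairs (map fst B) (map snd B)"
    using assms(2,3) L by (simp add: Pn_pairs_def zip_map_fst_snd)
qed

lemma (in xy_group) not_admissible_shorten:
  assumes "L \<noteq> []" and "\<not> admissible L"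
  obtains h L' where "h \<in> carrier G" and "L' \<noteq> []" and "length L' < length L"
    and "sum_list (map fst L') = sum_list (map fst L)" and "sum_list (map snd L') = sum_list (map snd L)"
    and "h \<otimes> pair_prod G x y L \<otimes> inv h = pair_prod G x y L'"
  using assms
proof (cases rule: not_admissible_cases)
  case (snd_zero A a a' b' B)
  then show thesis
    using that[OF one_closed, of "A @ (a + a', b') # B"]
      pair_prod_cong_infix[OF pair_prod_merge_snd_zero, where A = A and B = B]
    by (simp add: add.assoc)
next
  case (fst_zero A a b b' B)
  then show thesis
    using that[OF one_closed, of "A @ (a, b + b') # B"]
      pair_prod_cong_infix[OF pair_prod_merge_fst_zero, where A = A and B = B]
    by (simp add: add.assoc)
next
  case (head_fst_zero b M)
  obtain M' a' b' where M: "M = M' @ [(a', b')]"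
    using head_fst_zero(2) by (metis rev_exhaust prod.collapse)
  obtain h where "h \<in> carrier G"
    and "h \<otimes> pair_prod G x y L \<otimes> inv h = pair_prod G x y (M' @ [(a', b'), (0, b)])"
    using pair_prod_rotate[of "[(0, b)]" M] head_fst_zero M by auto
  then show thesis
    using that[of h "M' @ [(a', b' + b)]"] head_fst_zero M
      pair_prod_cong_infix[OF pair_prod_merge_fst_zero[of a' b' b], of M' "[]"]
    by (simp add: add.assoc add.commute)
qed

lemma (in xy_group) conj_admissible_exists:
  "L \<noteq> [] \<Longrightarrow> \<exists>h\<in>carrier G. \<exists>L'. admissible L' \<and>
     sum_list (map fst L') = sum_list (map fst L) \<and> sum_list (map snd L') = sum_list (map snd L) \<and>
     h \<otimes> pair_prod G x y L \<otimes> inv h = pair_prod G x y L'"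
proof (induction "length L" arbitrary: L rule: less_induct)
  case less
  show ?case
  proof (cases "admissible L")
    case True
    then show ?thesis
      by (intro bexI[of _ \<one>]) auto
  next
    case False
    with less.prems obtain h0 L0 where h0: "h0 \<in> carrier G" and "L0 \<noteq> []" and "length L0 < length L"
      and "sum_list (map fst L0) = sum_list (map fst L)" and "sum_list (map snd L0) = sum_list (map snd L)"
      and conj0: "h0 \<otimes> pair_prod G x y L \<otimes> inv h0 = pair_prod G x y L0"
      by (rule not_admissible_shorten)
    with less.hyps obtain h1 L' where h1: "h1 \<in> carrier G" and "admissible L'"
      and "sum_list (map fst L') = sum_list (map fst L)" and "sum_list (map snd L') = sum_list (map snd L)"
      and conj1: "h1 \<otimes> pair_prod G x y L0 \<otimes> inv h1 = pair_prod G x y L'"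
      by force
    moreover have "(h1 \<otimes> h0) \<otimes> pair_prod G x y L \<otimes> inv (h1 \<otimes> h0) = pair_prod G x y L'"
      using h0 h1 conj0 conj1 by (simp add: conj_mult)
    ultimately show ?thesis
      using h0 by (intro bexI[of _ "h1 \<otimes> h0"]) auto
  qed
qed

locale dicyclic_relation = xy_group +
  fixes n :: nat
  assumes x_pow_n: "x [^] int n = y \<otimes> y"
begin

lemma x_pow_n_commutes_y: "x [^] (int n * t) \<otimes> y = y \<otimes> x [^] (int n * t)"
proof -
  have "y \<otimes> y = y [^] (2::int)"
    using int_pow_mult[of y 1 1] by simp
  then have "x [^] (int n * t) = y [^] (2 * t)"
    using int_pow_pow[of x "int n" t] int_pow_pow[of y 2 t] by (simp add: x_pow_n)
  then show ?thesis
    using int_pow_mult[of y "2 * t" 1] int_pow_mult[of y 1 "2 * t"] by (simp add: add.commute)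
qed

lemma pair_prod_shift:
  "pair_prod G x y ((a - int n * t, b + int n * t) # L) = pair_prod G x y ((a, b) # L)"
proof -
  let ?z = "x [^] (int n * t)"
  have "x [^] (a - int n * t) \<otimes> y \<otimes> x [^] (b + int n * t) = x [^] (a - int n * t) \<otimes> (y \<otimes> ?z) \<otimes> x [^] b"
    using int_pow_mult[of x "int n * t" b] by (simp add: add.commute m_assoc)
  also have "\<dots> = x [^] (a - int n * t) \<otimes> ?z \<otimes> y \<otimes> x [^] b"
    by (simp add: x_pow_n_commutes_y[symmetric] m_assoc)
  also have "\<dots> = x [^] a \<otimes> y \<otimes> x [^] b"
    using int_pow_mult[of x "a - int n * t" "int n * t"] by simp
  finally show ?thesis
    by simp
qed

lemma pair_form_mult_y_True: "pair_form G x y L c True \<otimes> y = pair_form G x y L (c + int n) False"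
  by (simp add: pair_form_def m_assoc int_pow_mult x_pow_n)

lemma pair_form_mult_inv_y_False: "pair_form G x y L c False \<otimes> inv y = pair_form G x y L (c - int n) True"
proof -
  have "x [^] (- int n) \<otimes> y = inv y"
    by (simp add: int_pow_neg x_pow_n inv_mult_group m_assoc)
  then have "x [^] c \<otimes> inv y = x [^] (c - int n) \<otimes> y"
    using int_pow_mult[of x c "- int n"] by (simp add: m_assoc)
  then show ?thesis
    by (simp add: pair_form_def m_assoc)
qed

lemma pair_form_mult_generator:
  assumes "s \<in> {x, inv x, y, inv y}"
  shows "\<exists>L' c' e'. pair_form G x y L c e \<otimes> s = pair_form G x y L' c' e'"
proof -
  consider (x_pow) d where "s = x [^] (d::int)" | (y) "s = y" | (inv_y) "s = inv y"
  proof -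
    from assms consider "s = x" | "s = inv x" | "s = y" | "s = inv y"
      by blast
    then show thesis
      using that(1)[of 1] that(1)[of "- 1"] that(2,3) by cases (simp_all add: int_pow_neg)
  qed
  then show ?thesis
  proof cases
    case x_pow
    then show ?thesis
      by (cases e) (auto simp: pair_form_mult_x_pow)
  next
    case y
    then show ?thesis
      by (cases e) (auto simp: pair_form_mult_y_True pair_form_mult_y_False)
  next
    case inv_y
    then show ?thesis
      by (cases e) (auto simp: pair_form_mult_inv_y_True pair_form_mult_inv_y_False)
  qed
qed

lemma conj_pair_form_eq_Pn_pairs:
  assumes "n \<ge> 2"
    and sum: "sum_list (map fst L) + sum_list (map snd L) + c = 2"
    and diff: "(sum_list (map fst L) - sum_list (map snd L) + c) mod (2 * int n) = 0"
  obtains h ns ms where "h \<in> carrier G" and "length ns = length ms"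
    and "\<forall>i<length ns. ns ! i \<noteq> 0 \<and> ms ! i \<noteq> 0"
    and "h \<otimes> pair_form G x y L c False \<otimes> inv h = pair_prod G x y (Pn_pairs ns ms)"
proof -
  have "L \<noteq> []"
  proof
    assume "L = []"
    with sum diff have "2 mod (2 * int n) = 0"
      by simp
    with \<open>n \<ge> 2\<close> show False
      by simp
  qed
  then obtain a b L' where L: "L = (a, b) # L'"
    by (metis list.exhaust prod.collapse)
  from diff obtain t where t: "sum_list (map fst L) - sum_list (map snd L) + c = 2 * int n * t"
    by (metis dvd_def mod_0_imp_dvd)
  let ?L = "(c + a - int n * t, b + int n * t) # L'"
  have "x [^] c \<otimes> pair_form G x y L c False \<otimes> inv (x [^] c) = x [^] c \<otimes> pair_prod G x y L"
    by (simp add: pair_form_def m_assoc)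
  also have "\<dots> = pair_prod G x y ?L"
    by (simp only: L x_pow_mult_pair_prod pair_prod_shift)
  finally have conj_c: "x [^] c \<otimes> pair_form G x y L c False \<otimes> inv (x [^] c) = pair_prod G x y ?L" .
  have "sum_list (map fst ?L) = 1" and "sum_list (map snd ?L) = 1"
    using sum t L by (simp_all add: algebra_simps)
  with conj_admissible_exists[of ?L] obtain h L'' where h: "h \<in> carrier G" and adm: "admissible L''"
    and sums: "sum_list (map fst L'') = 1" "sum_list (map snd L'') = 1"
    and conj_h: "h \<otimes> pair_prod G x y ?L \<otimes> inv h = pair_prod G x y L''"
    by auto
  obtain ns ms where "length ns = length ms" and "\<forall>i<length ns. ns ! i \<noteq> 0 \<and> ms ! i \<noteq> 0"
    and "L'' = Pn_pairs ns ms"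
    using admissible_eq_Pn_pairs[OF adm sums] .
  moreover have "(h \<otimes> x [^] c) \<otimes> pair_form G x y L c False \<otimes> inv (h \<otimes> x [^] c) = pair_prod G x y L''"
    using h conj_c conj_h by (simp add: conj_mult)
  ultimately show thesis
    using h by (intro that[of "h \<otimes> x [^] c"]) auto
qed

end

interpretation FG_xy: xy_group FG gx gy
  by unfold_locales simp_all

lemma Pn_rel_eq_pair_prod: "Pn_rel ns ms = pair_prod FG gx gy (Pn_pairs ns ms)"
proof -
  have block: "red (xpow a @ [(GY, True)] @ xpow b @ [(GY, False)] @ w)
      = xpow a \<otimes>\<^bsub>FG\<^esub> (gy \<otimes>\<^bsub>FG\<^esub> (xpow b \<otimes>\<^bsub>FG\<^esub> (inv\<^bsub>FG\<^esub> gy \<otimes>\<^bsub>FG\<^esub> red w)))" for a b w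
    by (simp only: red_append_FG[of "xpow _"] red_append_FG[of "[_]"]) (simp add: red_carrier inv_gy, simp add: gy_def)
  have "red (concat (map (\<lambda>(a, b). xpow a @ [(GY, True)] @ xpow b @ [(GY, False)]) L))
      = pair_prod FG gx gy L" for L
  proof (induction L)
    case (Cons p L)
    then show ?case
      by (cases p) (simp only: list.map(2) concat.simps(2) prod.case append_assoc block,
          simp add: gx_int_pow F.m_assoc)
  qed (simp add: one_FG)
  then show ?thesis
    by (simp add: Pn_rel_def Pn_pairs_def)
qed

lemma weight_pair_form:
  "weight n (pair_form FG gx gy L c e) =
     2 * (sum_list (map fst L) + sum_list (map snd L) + c) + (if e then int n else 0)"
proof -
  have "weight n (pair_prod FG gx gy L) = 2 * (sum_list (map fst L) + sum_list (map snd L))"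
  proof (induction L)
    case (Cons p L)
    then show ?case
      by (cases p) (simp add: weight_mult weight_inv gx_int_pow weight_xpow weight_gy algebra_simps)
  qed (simp add: one_FG)
  then show ?thesis
    by (simp add: pair_form_def weight_mult gx_int_pow weight_xpow weight_gy one_FG algebra_simps)
qed

lemma dic_eval_pair_form:
  assumes "n \<ge> 1"
  shows "dic_eval n (pair_form FG gx gy L c e) =
    ((sum_list (map fst L) - sum_list (map snd L) + c) mod (2 * int n), e)"
proof -
  have "dic_eval n (pair_prod FG gx gy L) = ((sum_list (map fst L) - sum_list (map snd L)) mod (2 * int n), False)"
  proof (induction L)
    case (Cons p L)
    then show ?case
      using assms
      by (cases p) (simp add: dic_eval_mult gx_int_pow dic_eval_xpow dic_eval_gy dic_eval_inv_gy dic_mult_def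
          mod_simps; rule mod_eq_dvd_iff[THEN iffD2]; simp add: algebra_simps minus_div_mult_eq_mod[symmetric])
  qed (simp add: one_FG)
  then show ?thesis
    using assms
    by (simp add: pair_form_def dic_eval_mult gx_int_pow dic_eval_xpow dic_eval_gy one_FG dic_mult_def mod_simps;
        rule mod_eq_dvd_iff[THEN iffD2]; simp add: algebra_simps minus_div_mult_eq_mod[symmetric])
qed

lemma hom_FG_pair_form:
  assumes "dicyclic_relation H (f gx) (f gy) n" and "f \<in> hom FG H" and "w \<in> carrier FG"
  shows "\<exists>L c e. f w = pair_form H (f gx) (f gy) L c e"
  using \<open>w \<in> carrier FG\<close>
proof (induction w rule: rev_induct)
  interpret H: dicyclic_relation H "f gx" "f gy" n
    by (rule assms(1))
  interpret f: group_hom FG H f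
    using assms(2) by (intro group_hom_FG H.is_group)
  {
    case Nil
    have "f [] = pair_form H (f gx) (f gy) [] 0 False"
      using f.hom_one by (simp add: one_FG pair_form_def)
    then show ?case
      by blast
  next
    case (snoc a w)
    then have w: "w \<in> carrier FG" and a: "[a] \<in> carrier FG"
      by (simp_all add: carrier_FG reduced_snoc)
    have "w @ [a] = w \<otimes>\<^bsub>FG\<^esub> [a]"
      using snoc.prems by (intro snoc_FG) (simp add: carrier_FG)
    then have "f (w @ [a]) = f w \<otimes>\<^bsub>H\<^esub> f [a]"
      using w a by simp
    moreover have "f [a] \<in> {f gx, inv\<^bsub>H\<^esub> f gx, f gy, inv\<^bsub>H\<^esub> f gy}"
      using letter_FG_cases[of a] by auto
    ultimately show ?case
      using snoc.IH[OF w] H.pair_form_mult_generator by metis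
  }
qed

lemma dicyclic_relation_Mod_rel0:
  fixes n :: nat
  defines "N \<equiv> normal_closure FG {rel0 n}"
  shows "dicyclic_relation (FG Mod N) (N #>\<^bsub>FG\<^esub> gx) (N #>\<^bsub>FG\<^esub> gy) n"
proof -
  interpret N: normal N FG
    unfolding N_def by (rule F.normal_closure_normal) simp
  interpret pi: group_hom FG "FG Mod N" "\<lambda>w. N #>\<^bsub>FG\<^esub> w"
    by (intro group_hom_FG N.factorgroup_is_group N.r_coset_hom_Mod)
  have rel0_N: "N #>\<^bsub>FG\<^esub> rel0 n = N"
    using normal_closure_subset[of "{rel0 n}" FG] N.subgroup_axioms
    by (intro F.coset_join2) (simp_all add: N_def)
  have "(N #>\<^bsub>FG\<^esub> gx) [^]\<^bsub>FG Mod N\<^esub> int n = N #>\<^bsub>FG\<^esub> (gx [^]\<^bsub>FG\<^esub> n)"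
    by (simp add: int_pow_int pi.hom_nat_pow)
  also have "gx [^]\<^bsub>FG\<^esub> n = rel0 n \<otimes>\<^bsub>FG\<^esub> (gy \<otimes>\<^bsub>FG\<^esub> gy)"
    by (simp add: rel0_FG F.m_assoc)
  also have "N #>\<^bsub>FG\<^esub> (rel0 n \<otimes>\<^bsub>FG\<^esub> (gy \<otimes>\<^bsub>FG\<^esub> gy)) = N #>\<^bsub>FG\<^esub> (gy \<otimes>\<^bsub>FG\<^esub> gy)"
    by (simp only: rel0_N
        F.coset_mult_assoc[OF N.subset rel0_carrier[of n] F.m_closed[OF gy_carrier gy_carrier], symmetric])
  also have "\<dots> = (N #>\<^bsub>FG\<^esub> gy) \<otimes>\<^bsub>FG Mod N\<^esub> (N #>\<^bsub>FG\<^esub> gy)"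
    by (rule pi.hom_mult) simp_all
  finally show ?thesis
    by unfold_locales simp_all
qed

section \<open>Normalising the second relator\<close>

lemma pair_form_congruent_relator:
  assumes "n \<ge> 1" and R: "R \<in> carrier FG" and "weight n R = 4" and "dic_eval n R = (0, False)"
    and k: "k \<in> normal_closure FG {rel0 n}" and W: "pair_form FG gx gy L c e = R \<otimes>\<^bsub>FG\<^esub> k"
  shows "\<not> e" and "sum_list (map fst L) + sum_list (map snd L) + c = 2"
    and "(sum_list (map fst L) - sum_list (map snd L) + c) mod (2 * int n) = 0"
proof -
  interpret N: normal "normal_closure FG {rel0 n}" FG
    by (rule F.normal_closure_normal) simp
  have "k \<in> carrier FG"
    using k N.subset by blast
  moreover have "weight n k = 0"
    using weight_dvd_normal_closure[of "{rel0 n}" 0 n k] k by (simp add: weight_rel0)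
  moreover have "dic_eval n k = (0, False)"
    using dic_eval_normal_closure[OF assms(1), of "{rel0 n}" k] k by (simp add: dic_eval_rel0[OF assms(1)])
  ultimately have "weight n (pair_form FG gx gy L c e) = 4"
    and "dic_eval n (pair_form FG gx gy L c e) = (0, False)"
    using assms(1,3,4) R by (simp_all add: W weight_mult dic_eval_mult dic_mult_def)
  then show "\<not> e" and "sum_list (map fst L) + sum_list (map snd L) + c = 2"
    and "(sum_list (map fst L) - sum_list (map snd L) + c) mod (2 * int n) = 0"
    by (simp_all add: weight_pair_form dic_eval_pair_form[OF assms(1)])
qed

lemma conj_relator_eq_Pn_rel:
  assumes "n \<ge> 2" and R: "R \<in> carrier FG" and "weight n R = 4" and "dic_eval n R = (0, False)"
  obtains h ns ms c where "h \<in> carrier FG" and "length ns = length ms"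
    and "\<forall>i<length ns. ns ! i \<noteq> 0 \<and> ms ! i \<noteq> 0" and "c \<in> normal_closure FG {rel0 n}"
    and "Pn_rel ns ms = h \<otimes>\<^bsub>FG\<^esub> R \<otimes>\<^bsub>FG\<^esub> inv\<^bsub>FG\<^esub> h \<otimes>\<^bsub>FG\<^esub> c"
proof -
  define N where "N = normal_closure FG {rel0 n}"
  let ?Q = "FG Mod N" and ?\<pi> = "\<lambda>w. N #>\<^bsub>FG\<^esub> w"
  interpret N: normal N FG
    unfolding N_def by (rule F.normal_closure_normal) simp
  interpret pi: group_hom FG ?Q ?\<pi>
    by (intro group_hom_FG N.factorgroup_is_group N.r_coset_hom_Mod)
  interpret Q: dicyclic_relation ?Q "?\<pi> gx" "?\<pi> gy" n
    unfolding N_def by (rule dicyclic_relation_Mod_rel0)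
  obtain L c e where "?\<pi> R = pair_form ?Q (?\<pi> gx) (?\<pi> gy) L c e"
    using hom_FG_pair_form[OF Q.dicyclic_relation_axioms pi.homh R] by blast
  then have "?\<pi> (pair_form FG gx gy L c e) = ?\<pi> R"
    by (simp add: pi.hom_pair_form)
  then have "\<exists>k\<in>N. pair_form FG gx gy L c e = R \<otimes>\<^bsub>FG\<^esub> k"
    by (rule N.rcos_eq_imp_mult[OF _ R FG_xy.pair_form_closed])
  then obtain k where "k \<in> N" and "pair_form FG gx gy L c e = R \<otimes>\<^bsub>FG\<^esub> k" ..
  with assms have "\<not> e" and sum: "sum_list (map fst L) + sum_list (map snd L) + c = 2"
    and diff: "(sum_list (map fst L) - sum_list (map snd L) + c) mod (2 * int n) = 0"
    using pair_form_congruent_relator[of n R k L c e] by (simp_all add: N_def)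
  obtain h' ns ms where "h' \<in> carrier ?Q" and lengths: "length ns = length ms"
    and nonzero: "\<forall>i<length ns. ns ! i \<noteq> 0 \<and> ms ! i \<noteq> 0"
    and conj: "h' \<otimes>\<^bsub>?Q\<^esub> pair_form ?Q (?\<pi> gx) (?\<pi> gy) L c False \<otimes>\<^bsub>?Q\<^esub> inv\<^bsub>?Q\<^esub> h'
      = pair_prod ?Q (?\<pi> gx) (?\<pi> gy) (Pn_pairs ns ms)"
    using Q.conj_pair_form_eq_Pn_pairs[OF assms(1) sum diff] by blast
  then obtain h where h: "h \<in> carrier FG" and "h' = ?\<pi> h"
    unfolding carrier_FactGroup by blast
  with conj \<open>\<not> e\<close> \<open>?\<pi> R = _\<close> R have "?\<pi> (Pn_rel ns ms) = ?\<pi> (h \<otimes>\<^bsub>FG\<^esub> R \<otimes>\<^bsub>FG\<^esub> inv\<^bsub>FG\<^esub> h)"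
    by (simp add: Pn_rel_eq_pair_prod pi.hom_pair_prod)
  moreover have "Pn_rel ns ms \<in> carrier FG"
    by (simp add: Pn_rel_eq_pair_prod)
  ultimately have "\<exists>c\<in>N. Pn_rel ns ms = h \<otimes>\<^bsub>FG\<^esub> R \<otimes>\<^bsub>FG\<^esub> inv\<^bsub>FG\<^esub> h \<otimes>\<^bsub>FG\<^esub> c"
    using h R by (intro N.rcos_eq_imp_mult) simp_all
  then show thesis
    using that[OF h lengths nonzero] unfolding N_def by blast
qed

lemma regular_relator_normalise:
  assumes "n \<ge> 2" and R: "R \<in> carrier FG" and "regular n R"
  obtains R' where "[rel0 n, R] \<simeq>\<^sub>Q [rel0 n, R']" and "R' \<in> carrier FG"
    and "weight n R' = 4" and "dic_eval n R' = (0, False)"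
proof -
  have eq: "normal_closure FG {rel0 n, R} = normal_closure FG {rel0 n, qrel}"
    using assms(3) R by (rule regular_imp_normal_closure_eq)
  then have R_in: "R \<in> normal_closure FG {rel0 n, qrel}"
    using normal_closure_subset[of "{rel0 n, R}" FG] by blast
  have "\<bar>weight n R\<bar> = 4"
    using R eq by (rule weight_regular_relator)
  interpret N: normal "normal_closure FG {rel0 n, qrel}" FG
    by (rule F.normal_closure_normal) simp
  define R' where "R' = (if weight n R = 4 then R else inv\<^bsub>FG\<^esub> R)"
  have "[rel0 n, R] \<simeq>\<^sub>Q [rel0 n, R']"
    using Q_equiv_inv[OF R] by (simp add: R'_def)
  moreover have "R' \<in> carrier FG" and "weight n R' = 4"
    using R \<open>\<bar>weight n R\<bar> = 4\<close> by (auto simp: R'_def weight_inv)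
  moreover have "R' \<in> normal_closure FG {rel0 n, qrel}"
    using R_in by (simp add: R'_def)
  then have "dic_eval n R' = (0, False)"
    using assms(1) by (intro dic_eval_normal_closure) (simp_all add: dic_eval_rel0 dic_eval_qrel)
  ultimately show thesis
    by (rule that)
qed

theorem theorem3p1:
  fixes n :: nat and R :: word
  assumes "n \<ge> 2"
    and "R \<in> carrier FG"
    and "regular n R"
  shows "\<exists>(k::nat) (ns::int list) (ms::int list). length ns = k \<and> length ms = k \<and>
           (\<forall>i<k. ns ! i \<noteq> 0 \<and> ms ! i \<noteq> 0) \<and>
           [rel0 n, R] \<simeq>\<^sub>Q Pn n ns ms"
proof -
  obtain R' where "[rel0 n, R] \<simeq>\<^sub>Q [rel0 n, R']" and R': "R' \<in> carrier FG"
    and weight: "weight n R' = 4" and eval: "dic_eval n R' = (0, False)"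
    using regular_relator_normalise[OF assms] .
  obtain h ns ms c where h: "h \<in> carrier FG" and "length ns = length ms"
    and "\<forall>i<length ns. ns ! i \<noteq> 0 \<and> ms ! i \<noteq> 0" and c: "c \<in> normal_closure FG {rel0 n}"
    and Pn: "Pn_rel ns ms = h \<otimes>\<^bsub>FG\<^esub> R' \<otimes>\<^bsub>FG\<^esub> inv\<^bsub>FG\<^esub> h \<otimes>\<^bsub>FG\<^esub> c"
    using conj_relator_eq_Pn_rel[OF assms(1) R' weight eval] .
  note \<open>[rel0 n, R] \<simeq>\<^sub>Q [rel0 n, R']\<close>
  also have "[rel0 n, R'] \<simeq>\<^sub>Q [rel0 n, h \<otimes>\<^bsub>FG\<^esub> R' \<otimes>\<^bsub>FG\<^esub> inv\<^bsub>FG\<^esub> h]"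
    using h by (rule Q_equiv_conj)
  also have "\<dots> \<simeq>\<^sub>Q Pn n ns ms"
    unfolding Pn_def Pn using h R' c by (intro Q_equiv_mult_normal_closure) simp_all
  finally show ?thesis
    using \<open>length ns = length ms\<close> \<open>\<forall>i<length ns. _\<close>
    by (intro exI[of _ "length ns"] exI[of _ ns] exI[of _ ms]) simp
qed

end
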